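(* Let $e\in\mathbb{Z}/2$, $n\in2\mathbb{N}$, and let $\Delta\in\mathfrak{A}^n$ satisfy $n^\Delta_{-\lambda}=n^\Delta_\lambda$ and $n^\Delta_{\lambda^q}=n^\Delta_\lambda$ for all $\lambda\in k^*$. Then ${}^ej_\Delta=n(q-(-1)^e)/4\in\mathbb{Z}/2$.
   Context: $k$ is an algebraic closure of $\mathbb{F}_q$, $q$ odd; $k^\triangle=k\setminus\{0,1,-1\}$. Permutations of $k^\triangle$: $\alpha(\lambda)=\lambda^{-1}$, $\beta(\lambda)=-\lambda$, $\gamma(\lambda)=\lambda^q$, $\gamma_e=\beta^e\gamma$. $\Omega_{\alpha,\gamma_e}$ is the set of orbits on $k^\triangle$ of the group generated by $\alpha,\gamma_e$, and $\Omega'_{\alpha,\gamma_e}$ the set of those orbits that are a single $\gamma_e$-orbit. For monic $\Delta\in k[X]$ with $\Delta(0)\ne0$ write $\Delta=\prod_{\lambda\in k^*}(X-\lambda)^{n^\Delta_\lambda}$. $\mathfrak{A}^n$ is the set of such $\Delta$ of degree $n$ with $n^\Delta_{\lambda^{-1}}=n^\Delta_\lambda$ for all $\lambda$ and $n^\Delta_1,n^\Delta_{-1}$ even. When $\lambda\mapsto n^\Delta_\lambda$ is constant on each $\mathcal{O}\in\Omega_{\alpha,\gamma_e}$ (with value $n^\Delta_{\mathcal{O}}$), set ${}^ej_\Delta=\sum_{\mathcal{O}\in\Omega'_{\alpha,\gamma_e}}n^\Delta_{\mathcal{O}}\in\mathbb{Z}/2$. *)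

theory Defs
  imports "HOL-Computational_Algebra.Computational_Algebra"
begin

definition ktri :: "'k::field set" where
  "ktri = UNIV - {0, 1, -1}"

text \<open>gamma_e(x) = (-1)^e * x^q  (i.e. beta^e composed with the q-Frobenius).\<close>
definition gam :: "nat \<Rightarrow> nat \<Rightarrow> 'k::field \<Rightarrow> 'k" where
  "gam q e x = (-1) ^ e * x ^ q"

text \<open>Orbit of x in k-triangle under the group generated by alpha (inversion) and gamma_e.\<close>
inductive_set orbAG :: "nat \<Rightarrow> nat \<Rightarrow> 'k::field \<Rightarrow> 'k set" for q e x where
  base: "x \<in> ktri \<Longrightarrow> x \<in> orbAG q e x"
| inv: "y \<in> orbAG q e x \<Longrightarrow> inverse y \<in> orbAG q e x"
| fwd: "y \<in> orbAG q e x \<Longrightarrow> gam q e y \<in> orbAG q e x"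
| bwd: "y \<in> orbAG q e x \<Longrightarrow> z \<in> ktri \<Longrightarrow> gam q e z = y \<Longrightarrow> z \<in> orbAG q e x"

inductive_set orbG :: "nat \<Rightarrow> nat \<Rightarrow> 'k::field \<Rightarrow> 'k set" for q e x where
  base: "x \<in> ktri \<Longrightarrow> x \<in> orbG q e x"
| fwd: "y \<in> orbG q e x \<Longrightarrow> gam q e y \<in> orbG q e x"
| bwd: "y \<in> orbG q e x \<Longrightarrow> z \<in> ktri \<Longrightarrow> gam q e z = y \<Longrightarrow> z \<in> orbG q e x"

definition OmegaAG :: "nat \<Rightarrow> nat \<Rightarrow> 'k::field set set" where
  "OmegaAG q e = {Ob. \<exists>x\<in>ktri. Ob = orbAG q e x}"

definition OmegaAG' :: "nat \<Rightarrow> nat \<Rightarrow> 'k::field set set" where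
  "OmegaAG' q e = {Ob \<in> OmegaAG q e. \<exists>x\<in>Ob. Ob = orbG q e x}"

definition mult :: "'k::field poly \<Rightarrow> 'k \<Rightarrow> nat" where
  "mult D x = order x D"

text \<open>n^Delta_O: the (common) value of the multiplicity on the orbit Ob.\<close>
definition multO :: "'k::field poly \<Rightarrow> 'k set \<Rightarrow> nat" where
  "multO D Ob = mult D (SOME x. x \<in> Ob)"

definition frakA :: "nat \<Rightarrow> 'k::field poly set" where
  "frakA n = {D. lead_coeff D = 1 \<and> poly D 0 \<noteq> 0 \<and> degree D = n
      \<and> (\<forall>x. x \<noteq> 0 \<longrightarrow> mult D (inverse x) = mult D x)
      \<and> even (mult D 1) \<and> even (mult D (-1))}"

text \<open>^e j_Delta, as an integer representative of the element of Z/2: the sum over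
  Omega' of n_O (orbits with n_O = 0 contribute nothing, so only the finitely many
  with n_O \<noteq> 0 are summed).\<close>
definition jinv :: "nat \<Rightarrow> nat \<Rightarrow> 'k::field poly \<Rightarrow> int" where
  "jinv q e D = (\<Sum>Ob\<in>{Ob \<in> OmegaAG' q e. multO D Ob \<noteq> 0}. int (multO D Ob))"

end

theory Submission
  imports Defs
begin

(* Negation commutes with inversion and, q being odd, with gamma_e; so it permutes Omega' and
   preserves the orbit multiplicities, and pairing each orbit with its negative leaves only the
   negation-stable orbits of Omega' in j_Delta mod 2. Such an orbit contains y, -y and 1/y in one
   gamma_e-cycle, where -y and 1/y both sit half-way round the cycle; hence -y = 1/y, i.e. y = i or
   y = -i with i^2 = -1. The orbit {i, -i} lies in Omega' iff gamma_e(i) = -i, i.e. iff e + (q-1)/2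
   is odd. On the degree side, the roots of Delta outside {1, -1, i, -i} fall into classes
   {x, -x, 1/x, -1/x} of four elements with a common multiplicity, and n_1 = n_(-1) is even, so
   n = 2 n_i mod 4. Both sides of the claim are therefore n_i (e + (q-1)/2) mod 2. *)

lemma size_proots_eq_degree:
  fixes p :: "'a::field poly"
  assumes "\<And>P::'a poly. degree P > 0 \<Longrightarrow> \<exists>x. poly P x = 0"
  shows "size (proots p) = degree p"
proof (induction "degree p" arbitrary: p)
  case 0
  then obtain c where "p = [:c:]" by (metis degree_eq_zeroE)
  then show ?case by simp
next
  case (Suc d)
  then obtain x where "poly p x = 0" using assms by (metis zero_less_Suc)
  then obtain r where p: "p = [:-x, 1:] * r" using poly_eq_0_iff_dvd by (metis dvdE)
  have "r \<noteq> 0" using p Suc.hyps(2) by auto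
  then have "degree p = Suc (degree r)" unfolding p by (subst degree_mult_eq) auto
  moreover have "proots p = add_mset x (proots r)"
    using \<open>r \<noteq> 0\<close> by (subst p, subst proots_mult) auto
  ultimately show ?case using Suc.hyps by simp
qed

lemma sum_order_eq_degree:
  fixes p :: "'a::field poly"
  assumes "p \<noteq> 0" and "\<And>P::'a poly. degree P > 0 \<Longrightarrow> \<exists>x. poly P x = 0"
  shows "(\<Sum>x | poly p x = 0. order x p) = degree p"
  using size_proots_eq_degree[of p] assms by (simp add: size_multiset_overloaded_eq)

lemma dvd_sum_if_orbits:
  fixes f :: "'a \<Rightarrow> 'b::comm_semiring_1"
  assumes "finite A"
    and orb: "\<And>x. x \<in> A \<Longrightarrow> x \<in> orb x \<and> orb x \<subseteq> A \<and> card (orb x) = k"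
    and const: "\<And>x y. x \<in> A \<Longrightarrow> y \<in> orb x \<Longrightarrow> orb y = orb x \<and> f y = f x"
  shows "of_nat k dvd sum f A"
proof -
  have A: "A = \<Union> (orb ` A)"
    using orb by blast
  have finite_orb: "finite (orb x)" if "x \<in> A" for x
    using orb[OF that] \<open>finite A\<close> by (meson rev_finite_subset)
  have "\<forall>B\<in>orb ` A. \<forall>B'\<in>orb ` A. B \<noteq> B' \<longrightarrow> B \<inter> B' = {}"
    using const by (metis disjoint_iff imageE)
  then have "sum f A = (\<Sum>B \<in> orb ` A. sum f B)"
    using \<open>finite A\<close> finite_orb by (subst A, subst sum.Union_disjoint) auto
  moreover have "of_nat k dvd sum f B" if "B \<in> orb ` A" for B
  proof -
    obtain x where x: "x \<in> A" "B = orb x"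
      using \<open>B \<in> orb ` A\<close> by blast
    then have "sum f B = (\<Sum>y \<in> B. f x)"
      using const by (intro sum.cong) auto
    also have "\<dots> = of_nat k * f x"
      using orb x by simp
    finally show ?thesis
      by simp
  qed
  ultimately show ?thesis
    by (simp add: dvd_sum)
qed

lemma funpow_eq_if_half_periods:
  assumes "(f ^^ P) x = x" "P > 0"
    and "(f ^^ j) x \<noteq> x" "(f ^^ (2 * j)) x = x"
    and "(f ^^ k) x \<noteq> x" "(f ^^ (2 * k)) x = x"
  shows "(f ^^ j) x = (f ^^ k) x"
proof -
  define d where "d = (LEAST d. d > 0 \<and> (f ^^ d) x = x)"
  have d: "d > 0" "(f ^^ d) x = x"
    using LeastI[of "\<lambda>d. d > 0 \<and> (f ^^ d) x = x" P] assms(1,2) unfolding d_def by auto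
  have period_iff: "(f ^^ m) x = x \<longleftrightarrow> m mod d = 0" for m
  proof
    assume "(f ^^ m) x = x"
    then have "(f ^^ (m mod d)) x = x"
      using funpow_mod_eq[where f=f and n=d and x=x and m=m] d by simp
    then show "m mod d = 0"
      using not_less_Least[of "m mod d" "\<lambda>d. d > 0 \<and> (f ^^ d) x = x"] d
      unfolding d_def by auto
  qed (use funpow_mod_eq[where f=f and n=d and x=x and m=m] d in simp)
  have half: "2 * (m mod d) = d" if "(f ^^ m) x \<noteq> x" "(f ^^ (2 * m)) x = x" for m
  proof -
    have "0 < m mod d" "m mod d < d" using that period_iff d by auto
    moreover have "(2 * (m mod d)) mod d = 0" using that period_iff by (simp add: mod_mult_right_eq)
    ultimately obtain c where c: "2 * (m mod d) = d * c"
      by (metis mod_eq_0_iff_dvd dvdE)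
    have "d * c < d * 2" using c \<open>m mod d < d\<close> by linarith
    then have "c = 1" using c \<open>0 < m mod d\<close> by (cases c) auto
    then show ?thesis using c by simp
  qed
  have "j mod d = k mod d" using half assms by (metis mult_cancel_left zero_neq_numeral)
  then show ?thesis using funpow_mod_eq[where f=f and n=d and x=x] d by metis
qed

lemma power_power_mult_eq_self:
  fixes x :: "'a::monoid_mult"
  assumes "x ^ (q ^ N) = x"
  shows "x ^ (q ^ (N * t)) = x"
proof (induction t)
  case (Suc t)
  have "x ^ (q ^ (N * Suc t)) = (x ^ (q ^ (N * t))) ^ (q ^ N)"
    by (simp add: power_add power_mult[symmetric] mult.commute)
  then show ?case using Suc assms by simp
qed simp

lemma minus_neq_self:
  fixes a :: "'a::idom"
  assumes "(2::'a) \<noteq> 0" and "a \<noteq> 0"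
  shows "- a \<noteq> a"
  using assms by (auto simp: neg_eq_iff_add_eq_0 simp flip: mult_2)

lemma two_neq_zero_if_odd_char:
  assumes "odd p" and "of_nat p = (0::'a::ring_1)"
  shows "(2::'a) \<noteq> 0"
proof
  assume "(2::'a) = 0"
  obtain t where "p = 2 * t + 1"
    using \<open>odd p\<close> by (elim oddE)
  then have "of_nat p = (2::'a) * of_nat t + 1"
    by simp
  then show False
    using \<open>(2::'a) = 0\<close> assms(2) by simp
qed

lemma sqrt_minus_one_exists:
  assumes "\<And>P::'a::field poly. degree P > 0 \<Longrightarrow> \<exists>x. poly P x = 0"
  shows "\<exists>i::'a. i * i = -1"
proof -
  obtain x :: 'a where "poly [:1, 0, 1:] x = 0"
    using assms[of "[:1, 0, 1:]"] by auto
  then have "x * x = -1"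
    by (simp add: eq_neg_iff_add_eq_0 add.commute)
  then show ?thesis ..
qed

lemma card_klein_orbit:
  fixes x i :: "'a::field"
  assumes "(2::'a) \<noteq> 0" and "i * i = -1" and "x \<notin> {0, 1, -1, i, -i}"
  shows "card {x, -x, inverse x, - inverse x} = 4"
proof -
  have "x * x \<noteq> 1" "x * x \<noteq> -1"
    using assms(2,3) square_eq_1_iff[of x] square_eq_iff[of x i] by auto
  moreover have "x * inverse x = 1"
    using assms(3) by simp
  ultimately have "x \<noteq> inverse x" "x \<noteq> - inverse x"
    by (metis, metis mult_minus_right)
  moreover have "x \<noteq> - x" "inverse x \<noteq> - inverse x"
    using assms(3) minus_neq_self[OF assms(1), of x] minus_neq_self[OF assms(1), of "inverse x"]
    by auto
  ultimately show ?thesis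
    by (simp add: minus_equation_iff[of x] eq_commute[of "- x"])
qed

lemma image_uminus_eq_if_uminus_mem:
  fixes orb :: "'a::group_add \<Rightarrow> 'a set"
  assumes "\<And>x y. y \<in> orb x \<Longrightarrow> - y \<in> orb (- x)"
  shows "uminus ` orb x = orb (- x)"
  using assms[of _ x] assms[of _ "- x"] by (auto intro: image_eqI[of _ uminus "- _"])

lemma sqrt_minus_one_in_ktri:
  fixes i :: "'a::field"
  assumes "(2::'a) \<noteq> 0" and "i * i = -1"
  shows "i \<in> ktri"
proof -
  have "(1::'a) \<noteq> -1"
    using minus_neq_self[OF assms(1), of 1] by auto
  then show ?thesis
    using assms(2) by (auto simp: ktri_def)
qed

lemma ktri_uminus: "x \<in> ktri \<Longrightarrow> - x \<in> ktri"
  unfolding ktri_def by (auto simp: minus_equation_iff[of x])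

lemma ktri_inverse: "x \<in> ktri \<Longrightarrow> inverse x \<in> ktri"
  unfolding ktri_def by auto (metis inverse_minus_eq inverse_inverse_eq inverse_1)+

lemma gam_inverse: "gam q e (inverse x) = inverse (gam q e x)"
  by (cases "even e") (simp_all add: gam_def power_inverse)

lemma gam_times_self: "gam q e x * gam q e x = (x * x) ^ q"
  by (cases "even e") (simp_all add: gam_def power_mult_distrib)

lemma funpow_gam_inverse: "(gam q e ^^ j) (inverse x) = inverse ((gam q e ^^ j) x)"
  by (induction j) (simp_all add: gam_inverse)

lemma orbG_subset_orbAG: "orbG q e x \<subseteq> orbAG q e x"
proof
  show "y \<in> orbAG q e x" if "y \<in> orbG q e x" for y
    using that by (induction rule: orbG.induct) (auto intro: orbAG.intros)
qed

lemma gam_sqrt_minus_one_eq_iff: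
  fixes i :: "'a::field"
  assumes "(2::'a) \<noteq> 0" and "i * i = -1" and "q = 2 * r + 1"
  shows "gam q e i = - i \<longleftrightarrow> odd (e + r)"
proof -
  have "i ^ q = (-1) ^ r * i"
    using assms(2,3) by (simp add: power_add power_mult power2_eq_square)
  then have "gam q e i = (-1) ^ (e + r) * i"
    by (simp add: gam_def power_add)
  moreover have "i \<noteq> - i"
    using minus_neq_self[OF assms(1), of i] sqrt_minus_one_in_ktri[OF assms(1,2)]
    by (auto simp: ktri_def)
  ultimately show ?thesis
    by (cases "even (e + r)") auto
qed

lemma four_dvd_sum_mult_off_fourth_roots_of_unity:
  fixes D :: "'a::field poly" and i :: 'a
  assumes "D \<noteq> 0" and "poly D 0 \<noteq> 0"
    and two: "(2::'a) \<noteq> 0" and i: "i * i = -1"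
    and mult_inverse: "\<forall>x. x \<noteq> 0 \<longrightarrow> mult D (inverse x) = mult D x"
    and mult_uminus: "\<forall>x. x \<noteq> 0 \<longrightarrow> mult D (- x) = mult D x"
  shows "4 dvd (\<Sum>x \<in> {x. poly D x = 0} - {1, -1, i, -i}. mult D x)"
proof -
  define Z where "Z = {x. poly D x = 0}"
  define F where "F = {1, -1, i, -i}"
  define orb where "orb x = {x, -x, inverse x, - inverse x}" for x :: 'a
  have root_iff: "x \<in> Z \<longleftrightarrow> mult D x \<noteq> 0" for x
    using \<open>D \<noteq> 0\<close> unfolding Z_def mult_def by (simp add: order_root)
  have mult_orb: "mult D y = mult D x" if "x \<noteq> 0" "y \<in> orb x" for x y
  proof -
    have "mult D (- x) = mult D x" "mult D (inverse x) = mult D x"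
      "mult D (- inverse x) = mult D (inverse x)"
      using that(1) mult_inverse mult_uminus by simp_all
    then show ?thesis
      using that(2) unfolding orb_def by auto
  qed
  have "inverse i = - i"
    using i by (intro inverse_unique) simp
  then have "- c \<in> F" "inverse c \<in> F" if "c \<in> F" for c
    using that unfolding F_def by auto
  then have F_closed: "- x \<in> F \<longleftrightarrow> x \<in> F" "inverse x \<in> F \<longleftrightarrow> x \<in> F" for x
    by (metis minus_minus, metis inverse_inverse_eq)
  have "of_nat 4 dvd sum (mult D) (Z - F)"
  proof (rule dvd_sum_if_orbits[where orb = orb])
    show "finite (Z - F)"
      using poly_roots_finite[OF \<open>D \<noteq> 0\<close>] by (simp add: Z_def)
    fix x assume "x \<in> Z - F"
    then have "x \<noteq> 0" "x \<notin> F" "mult D x \<noteq> 0"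
      using \<open>poly D 0 \<noteq> 0\<close> root_iff by (auto simp: Z_def)
    have "orb x \<subseteq> Z"
      using mult_orb[OF \<open>x \<noteq> 0\<close>] \<open>mult D x \<noteq> 0\<close> by (auto simp: root_iff)
    moreover have "orb x \<inter> F = {}"
      using \<open>x \<notin> F\<close> F_closed unfolding orb_def by auto
    moreover have "card (orb x) = 4"
      using card_klein_orbit[OF two i, of x] \<open>x \<noteq> 0\<close> \<open>x \<notin> F\<close>
      unfolding orb_def F_def by simp
    ultimately show "x \<in> orb x \<and> orb x \<subseteq> Z - F \<and> card (orb x) = 4"
      unfolding orb_def by blast
    fix y assume "y \<in> orb x"
    then have "orb y = orb x"
      unfolding orb_def by (auto simp: insert_commute)
    then show "orb y = orb x \<and> mult D y = mult D x"
      using mult_orb[OF \<open>x \<noteq> 0\<close> \<open>y \<in> orb x\<close>] by simp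
  qed
  then show ?thesis
    by (simp add: Z_def F_def)
qed

lemma degree_eq_twice_mult_sqrt_minus_one_mod_4:
  fixes D :: "'a::field poly" and i :: 'a
  assumes "D \<noteq> 0" and "poly D 0 \<noteq> 0"
    and closed: "\<And>P::'a poly. degree P > 0 \<Longrightarrow> \<exists>x. poly P x = 0"
    and two: "(2::'a) \<noteq> 0" and i: "i * i = -1"
    and mult_inverse: "\<forall>x. x \<noteq> 0 \<longrightarrow> mult D (inverse x) = mult D x"
    and mult_uminus: "\<forall>x. x \<noteq> 0 \<longrightarrow> mult D (- x) = mult D x"
    and "even (mult D 1)"
  shows "\<exists>K. degree D = 2 * mult D i + 4 * K"
proof -
  define Z where "Z = {x. poly D x = 0}"
  define F where "F = {1, -1, i, -i}"
  have "i \<in> ktri"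
    by (rule sqrt_minus_one_in_ktri[OF two i])
  then have "i \<noteq> 0" "i \<noteq> 1" "i \<noteq> -1"
    by (auto simp: ktri_def)
  then have F_distinct: "(1::'a) \<noteq> -1" "i \<noteq> 1" "i \<noteq> -1" "- i \<noteq> 1" "- i \<noteq> -1" "- i \<noteq> i"
    using minus_neq_self[OF two, of 1] minus_neq_self[OF two, of i]
    by (auto dest: minus_equation_iff[THEN iffD1])
  have "finite Z"
    using poly_roots_finite[OF \<open>D \<noteq> 0\<close>] by (simp add: Z_def)
  have "degree D = sum (mult D) Z"
    using sum_order_eq_degree[OF \<open>D \<noteq> 0\<close> closed] by (simp add: Z_def mult_def)
  also have "\<dots> = sum (mult D) (F \<union> (Z - F))"
    using \<open>finite Z\<close> \<open>D \<noteq> 0\<close>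
    by (intro sum.mono_neutral_left) (auto simp: F_def Z_def mult_def order_root)
  also have "\<dots> = sum (mult D) F + sum (mult D) (Z - F)"
    using \<open>finite Z\<close> by (intro sum.union_disjoint) (auto simp: F_def)
  also have "sum (mult D) F = 2 * mult D 1 + 2 * mult D i"
    using F_distinct mult_uminus \<open>i \<noteq> 0\<close> by (simp add: F_def)
  finally have "degree D = 2 * mult D 1 + 2 * mult D i + sum (mult D) (Z - F)" .
  moreover obtain a b where "mult D 1 = 2 * a" "sum (mult D) (Z - F) = 4 * b"
    using \<open>even (mult D 1)\<close>
      four_dvd_sum_mult_off_fourth_roots_of_unity[OF assms(1,2) two i mult_inverse mult_uminus]
    unfolding Z_def F_def by (elim evenE dvdE)
  ultimately have "degree D = 2 * mult D i + 4 * (a + b)"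
    by simp
  then show ?thesis ..
qed

lemma gam_uminus: "odd q \<Longrightarrow> gam q e (- x) = - gam q e x"
  by (simp add: gam_def)

lemma funpow_gam_uminus: "odd q \<Longrightarrow> (gam q e ^^ j) (- x) = - (gam q e ^^ j) x"
  by (induction j) (simp_all add: gam_uminus)

lemma gam_gam: "odd q \<Longrightarrow> gam q e (gam q e x) = x ^ (q * q)"
  by (cases "even e") (simp_all add: gam_def power_mult_distrib power_mult)

lemma funpow_gam_double:
  assumes "odd q"
  shows "(gam q e ^^ (2 * t)) x = x ^ (q ^ (2 * t))"
proof (induction t)
  case (Suc t)
  have "(gam q e ^^ (2 * Suc t)) x = gam q e (gam q e ((gam q e ^^ (2 * t)) x))"
    by simp
  also have "\<dots> = x ^ (q ^ (2 * Suc t))"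
    using Suc assms by (simp add: gam_gam power_mult[symmetric] algebra_simps)
  finally show ?case .
qed simp

lemma uminus_mem_orbAG:
  assumes "odd q" and "y \<in> orbAG q e x"
  shows "- y \<in> orbAG q e (- x)"
  using assms(2)
proof (induction rule: orbAG.induct)
  case (inv y)
  have "inverse (- y) \<in> orbAG q e (- x)" by (rule orbAG.inv[OF inv.IH])
  then show ?case by simp
next
  case (fwd y)
  have "gam q e (- y) \<in> orbAG q e (- x)" by (rule orbAG.fwd[OF fwd.IH])
  then show ?case using assms(1) by (simp add: gam_uminus)
next
  case (bwd y z)
  show ?case
    by (rule orbAG.bwd[OF bwd.IH]) (use bwd assms(1) in \<open>simp_all add: gam_uminus ktri_uminus\<close>)
qed (intro orbAG.base ktri_uminus)

lemma uminus_mem_orbG: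
  assumes "odd q" and "y \<in> orbG q e x"
  shows "- y \<in> orbG q e (- x)"
  using assms(2)
proof (induction rule: orbG.induct)
  case (fwd y)
  have "gam q e (- y) \<in> orbG q e (- x)" by (rule orbG.fwd[OF fwd.IH])
  then show ?case using assms(1) by (simp add: gam_uminus)
next
  case (bwd y z)
  show ?case
    by (rule orbG.bwd[OF bwd.IH]) (use bwd assms(1) in \<open>simp_all add: gam_uminus ktri_uminus\<close>)
qed (intro orbG.base ktri_uminus)

lemma image_uminus_orbAG: "odd q \<Longrightarrow> uminus ` orbAG q e x = orbAG q e (- x)"
  by (rule image_uminus_eq_if_uminus_mem) (rule uminus_mem_orbAG)

lemma image_uminus_orbG: "odd q \<Longrightarrow> uminus ` orbG q e x = orbG q e (- x)"
  by (rule image_uminus_eq_if_uminus_mem) (rule uminus_mem_orbG)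

lemma image_uminus_OmegaAG':
  assumes "odd q" and "Ob \<in> OmegaAG' q e"
  shows "uminus ` Ob \<in> OmegaAG' q e"
proof -
  obtain x y where "x \<in> ktri" and Ob_AG: "Ob = orbAG q e x"
    and "y \<in> Ob" and Ob_G: "Ob = orbG q e y"
    using assms(2) unfolding OmegaAG'_def OmegaAG_def by blast
  moreover have "uminus ` Ob = orbAG q e (- x)"
    unfolding Ob_AG by (rule image_uminus_orbAG[OF assms(1)])
  moreover have "uminus ` Ob = orbG q e (- y)"
    unfolding Ob_G by (rule image_uminus_orbG[OF assms(1)])
  ultimately show ?thesis
    unfolding OmegaAG'_def OmegaAG_def using ktri_uminus by blast
qed

definition mult_invariant :: "nat \<Rightarrow> 'k::field poly \<Rightarrow> bool" where
  "mult_invariant q D \<longleftrightarrow> (\<forall>x. x \<noteq> 0 \<longrightarrow>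
     mult D (inverse x) = mult D x \<and> mult D (- x) = mult D x \<and> mult D (x ^ q) = mult D x)"

lemma mult_gam:
  assumes "mult_invariant q D" and "x \<noteq> 0"
  shows "mult D (gam q e x) = mult D x"
  using assms unfolding mult_invariant_def gam_def by (cases "even e") simp_all

lemma power_q_inj:
  fixes x y :: "'k::field"
  assumes periodic: "\<forall>x::'k. \<exists>N>0. x ^ (q ^ N) = x" and "x ^ q = y ^ q"
  shows "x = y"
proof -
  obtain N1 N2 where N: "N1 > 0" "x ^ (q ^ N1) = x" "N2 > 0" "y ^ (q ^ N2) = y"
    using periodic by meson
  define M where "M = N1 * N2 - 1"
  have q_power: "q ^ (N1 * N2) = q * q ^ M"
    using N unfolding M_def by (simp flip: power_Suc)
  have "x = x ^ (q ^ (N1 * N2))"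
    using power_power_mult_eq_self[OF N(2)] by simp
  also have "\<dots> = (x ^ q) ^ (q ^ M)"
    unfolding q_power by (rule power_mult)
  also have "\<dots> = (y ^ q) ^ (q ^ M)"
    using assms(2) by simp
  also have "\<dots> = y ^ (q ^ (N2 * N1))"
    unfolding mult.commute[of N2] q_power by (rule power_mult[symmetric])
  also have "\<dots> = y"
    using power_power_mult_eq_self[OF N(4)] by simp
  finally show ?thesis .
qed

lemma gam_inj:
  fixes x y :: "'k::field"
  assumes periodic: "\<forall>x::'k. \<exists>N>0. x ^ (q ^ N) = x" and "gam q e x = gam q e y"
  shows "x = y"
  using assms by (auto simp: gam_def intro: power_q_inj)

lemma gam_periodic:
  fixes x :: "'k::field"
  assumes odd_q: "odd q" and periodic: "\<forall>x::'k. \<exists>N>0. x ^ (q ^ N) = x"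
  shows "\<exists>P>0. (gam q e ^^ P) x = x"
proof -
  obtain N where N: "N > 0" "x ^ (q ^ N) = x"
    using periodic by blast
  have "(gam q e ^^ (2 * N)) x = x ^ (q ^ (2 * N))"
    by (rule funpow_gam_double[OF odd_q])
  also have "\<dots> = x"
    using power_power_mult_eq_self[OF N(2), of 2] by (metis mult.commute)
  finally show ?thesis using N(1) by (intro exI[of _ "2 * N"]) simp
qed

lemma ktri_gam:
  fixes x :: "'k::field"
  assumes odd_q: "odd q" and periodic: "\<forall>x::'k. \<exists>N>0. x ^ (q ^ N) = x"
    and "x \<in> ktri"
  shows "gam q e x \<in> ktri"
proof -
  have "x ^ q \<in> ktri"
    using power_q_inj[OF periodic, of x 1] power_q_inj[OF periodic, of x "-1"] odd_q assms(3)
    by (auto simp: ktri_def)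
  then show ?thesis
    unfolding gam_def by (cases "even e") (simp_all add: ktri_uminus)
qed

lemma orbAG_subset_ktri:
  fixes x :: "'k::field"
  assumes odd_q: "odd q" and periodic: "\<forall>x::'k. \<exists>N>0. x ^ (q ^ N) = x"
  shows "orbAG q e x \<subseteq> ktri"
proof
  show "y \<in> ktri" if "y \<in> orbAG q e x" for y
    using that by (induction rule: orbAG.induct) (auto intro: ktri_inverse ktri_gam[OF assms])
qed

lemma funpow_gam_if_mem_orbG:
  fixes x :: "'k::field"
  assumes odd_q: "odd q" and periodic: "\<forall>x::'k. \<exists>N>0. x ^ (q ^ N) = x"
    and "y \<in> orbG q e x"
  shows "\<exists>j. y = (gam q e ^^ j) x"
  using assms(3)
proof (induction rule: orbG.induct)
  case base
  show ?case by (intro exI[of _ 0]) simp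
next
  case (fwd y)
  then obtain j where "y = (gam q e ^^ j) x" by blast
  then show ?case by (intro exI[of _ "Suc j"]) simp
next
  case (bwd y z)
  then obtain j where j: "y = (gam q e ^^ j) x" by blast
  obtain P where "P > 0" "(gam q e ^^ P) z = z"
    using gam_periodic[OF odd_q periodic] by blast
  then have "z = (gam q e ^^ (P - 1)) (gam q e z)"
    by (metis Suc_diff_1 comp_apply funpow_Suc_right)
  also have "\<dots> = (gam q e ^^ (P - 1 + j)) x"
    using j bwd.hyps by (simp add: funpow_add)
  finally show ?case by blast
qed

lemma mem_orbG_fixed:
  fixes y :: "'k::field"
  assumes periodic: "\<forall>x::'k. \<exists>N>0. x ^ (q ^ N) = x"
    and "z \<in> orbG q e y" and "gam q e y = y"
  shows "z = y"
  using assms(2,3) by (induction rule: orbG.induct) (auto dest: gam_inj[OF periodic])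

lemma square_eq_minus_one_if_mem_orbAG:
  fixes x :: "'k::field"
  assumes odd_q: "odd q" and periodic: "\<forall>x::'k. \<exists>N>0. x ^ (q ^ N) = x"
    and "y \<in> orbAG q e x" and "x * x = -1"
  shows "y * y = -1"
  using assms(3,4)
proof (induction rule: orbAG.induct)
  case (inv y)
  then show ?case by (metis inverse_minus_eq inverse_mult_distrib inverse_1)
next
  case (fwd y)
  then show ?case
    using gam_times_self[of q e y] odd_q by simp
next
  case (bwd y z)
  have "(z * z) ^ q = gam q e z * gam q e z"
    by (simp add: gam_times_self)
  also have "\<dots> = (-1) ^ q"
    using bwd odd_q by simp
  finally show ?case by (rule power_q_inj[OF periodic])
qed

lemma square_eq_minus_one_if_uminus_inverse_mem_orbG:
  fixes y :: "'k::field"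
  assumes odd_q: "odd q" and periodic: "\<forall>x::'k. \<exists>N>0. x ^ (q ^ N) = x"
    and "(2::'k) \<noteq> 0" and "y \<in> ktri"
    and "- y \<in> orbG q e y" and "inverse y \<in> orbG q e y"
  shows "y * y = -1"
proof -
  let ?G = "gam q e"
  obtain j where j: "(?G ^^ j) y = - y"
    using funpow_gam_if_mem_orbG[OF odd_q periodic assms(5)] by metis
  obtain k where k: "(?G ^^ k) y = inverse y"
    using funpow_gam_if_mem_orbG[OF odd_q periodic assms(6)] by metis
  have j2: "(?G ^^ (2 * j)) y = y"
    using j by (simp add: mult_2 funpow_add funpow_gam_uminus odd_q)
  have k2: "(?G ^^ (2 * k)) y = y"
    using k by (simp add: mult_2 funpow_add funpow_gam_inverse)
  have "- y \<noteq> y"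
    using minus_neq_self[OF assms(3), of y] assms(4) by (simp add: ktri_def)
  moreover have "inverse y \<noteq> y"
  proof
    assume "inverse y = y"
    then have "y * y = 1" using assms(4) right_inverse[of y] by (simp add: ktri_def)
    then show False using assms(4) by (simp add: ktri_def square_eq_1_iff)
  qed
  moreover obtain P where "(?G ^^ P) y = y" "P > 0"
    using gam_periodic[OF odd_q periodic] by blast
  ultimately have "- y = inverse y"
    using funpow_eq_if_half_periods[where f="?G"] j k j2 k2 by metis
  then show ?thesis
    using assms(4) by (simp add: ktri_def minus_equation_iff[of y] field_simps)
qed

lemma orbAG_sqrt_minus_one:
  fixes i :: "'k::field"
  assumes odd_q: "odd q" and periodic: "\<forall>x::'k. \<exists>N>0. x ^ (q ^ N) = x"
    and "(2::'k) \<noteq> 0" and "i * i = -1"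
  shows "orbAG q e i = {i, -i}"
proof
  show "orbAG q e i \<subseteq> {i, -i}"
  proof
    fix y assume "y \<in> orbAG q e i"
    then have "y * y = i * i"
      using square_eq_minus_one_if_mem_orbAG[OF odd_q periodic] assms(4) by simp
    then show "y \<in> {i, -i}"
      by (simp add: square_eq_iff)
  qed
  have "i \<in> orbAG q e i"
    by (rule orbAG.base[OF sqrt_minus_one_in_ktri[OF assms(3,4)]])
  moreover have "inverse i = - i"
    using assms(4) by (intro inverse_unique) simp
  ultimately show "{i, -i} \<subseteq> orbAG q e i"
    using orbAG.inv[of i q e i] by simp
qed

lemma sqrt_minus_one_orbit_in_OmegaAG'_iff:
  fixes i :: "'k::field"
  assumes odd_q: "odd q" and periodic: "\<forall>x::'k. \<exists>N>0. x ^ (q ^ N) = x"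
    and "(2::'k) \<noteq> 0" and "i * i = -1"
  shows "{i, -i} \<in> OmegaAG' q e \<longleftrightarrow> gam q e i = - i"
proof -
  have orb: "orbAG q e i = {i, -i}"
    by (rule orbAG_sqrt_minus_one[OF assms])
  have "i \<in> ktri"
    by (rule sqrt_minus_one_in_ktri[OF assms(3,4)])
  then have "i \<noteq> - i"
    using minus_neq_self[OF assms(3), of i] by (auto simp: ktri_def)
  show ?thesis
  proof
    assume "{i, -i} \<in> OmegaAG' q e"
    then obtain y where y: "y \<in> {i, -i}" "orbG q e y = {i, -i}"
      unfolding OmegaAG'_def by auto
    show "gam q e i = - i"
    proof (rule ccontr)
      assume "gam q e i \<noteq> - i"
      moreover have "gam q e i \<in> {i, -i}"
        using orb orbAG.fwd[OF orbAG.base[OF \<open>i \<in> ktri\<close>]] by blast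
      ultimately have "gam q e y = y"
        using y(1) by (auto simp: gam_uminus[OF odd_q])
      then have "orbG q e y \<subseteq> {y}"
        using mem_orbG_fixed[OF periodic] by blast
      then show False
        using y \<open>i \<noteq> - i\<close> by auto
    qed
  next
    assume "gam q e i = - i"
    have "i \<in> orbG q e i"
      using \<open>i \<in> ktri\<close> by (rule orbG.base)
    moreover from this have "gam q e i \<in> orbG q e i"
      by (rule orbG.fwd)
    ultimately have "orbG q e i = {i, -i}"
      using orbG_subset_orbAG[of q e i] orb \<open>gam q e i = - i\<close> by auto
    then show "{i, -i} \<in> OmegaAG' q e"
      unfolding OmegaAG'_def OmegaAG_def using orb \<open>i \<in> ktri\<close> by auto
  qed
qed

lemma OmegaAG'_uminus_invariant_eq:
  fixes i :: "'k::field" and Ob :: "'k set"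
  assumes odd_q: "odd q" and periodic: "\<forall>x::'k. \<exists>N>0. x ^ (q ^ N) = x"
    and "(2::'k) \<noteq> 0" and "i * i = -1"
    and "Ob \<in> OmegaAG' q e" and "uminus ` Ob = Ob"
  shows "Ob = {i, -i}"
proof -
  obtain x y where x: "x \<in> ktri" "Ob = orbAG q e x" and y: "y \<in> Ob" "Ob = orbG q e y"
    using assms(5) unfolding OmegaAG'_def OmegaAG_def by blast
  have "y \<in> ktri"
    using x y orbAG_subset_ktri[OF odd_q periodic] by blast
  moreover have "- y \<in> Ob"
    using y(1) assms(6) by (metis image_eqI)
  moreover have "inverse y \<in> Ob"
    using orbAG.inv[of y q e x] x(2) y(1) by simp
  ultimately have "y * y = -1"
    using square_eq_minus_one_if_uminus_inverse_mem_orbG[OF odd_q periodic assms(3)] y(2) by simp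
  have "Ob \<subseteq> {i, -i}"
  proof
    fix z assume "z \<in> Ob"
    then have "z \<in> orbAG q e y"
      using y(2) orbG_subset_orbAG by blast
    then have "z * z = i * i"
      using square_eq_minus_one_if_mem_orbAG[OF odd_q periodic] \<open>y * y = -1\<close> assms(4) by simp
    then show "z \<in> {i, -i}"
      by (simp add: square_eq_iff)
  qed
  moreover have "{i, -i} \<subseteq> Ob"
  proof -
    have "y = i \<or> y = - i"
      using \<open>Ob \<subseteq> {i, -i}\<close> y(1) by blast
    then show ?thesis
      using y(1) \<open>- y \<in> Ob\<close> by (elim disjE) simp_all
  qed
  ultimately show ?thesis
    by (rule subset_antisym)
qed

lemma mult_orbAG:
  fixes D :: "'k::field poly"
  assumes odd_q: "odd q" and periodic: "\<forall>x::'k. \<exists>N>0. x ^ (q ^ N) = x"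
    and "mult_invariant q D" and "y \<in> orbAG q e x"
  shows "mult D y = mult D x"
  using assms(4)
proof (induction rule: orbAG.induct)
  case (inv y)
  then have "y \<noteq> 0"
    using orbAG_subset_ktri[OF odd_q periodic] by (auto simp: ktri_def)
  then show ?case
    using inv.IH assms(3) by (simp add: mult_invariant_def)
next
  case (fwd y)
  then have "y \<noteq> 0"
    using orbAG_subset_ktri[OF odd_q periodic] by (auto simp: ktri_def)
  then show ?case
    using fwd.IH mult_gam[OF assms(3)] by simp
next
  case (bwd y z)
  then have "z \<noteq> 0"
    by (auto simp: ktri_def)
  then show ?case
    using bwd.IH bwd.hyps(3) mult_gam[OF assms(3)] by metis
qed simp

lemma multO_orbAG:
  fixes D :: "'k::field poly"
  assumes odd_q: "odd q" and periodic: "\<forall>x::'k. \<exists>N>0. x ^ (q ^ N) = x"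
    and "mult_invariant q D" and "x \<in> ktri"
  shows "multO D (orbAG q e x) = mult D x"
proof -
  have "x \<in> orbAG q e x"
    using assms(4) by (rule orbAG.base)
  then have "(SOME y. y \<in> orbAG q e x) \<in> orbAG q e x"
    by (rule someI)
  then show ?thesis
    unfolding multO_def by (rule mult_orbAG[OF assms(1-3)])
qed

lemma multO_image_uminus:
  fixes D :: "'k::field poly"
  assumes odd_q: "odd q" and periodic: "\<forall>x::'k. \<exists>N>0. x ^ (q ^ N) = x"
    and "mult_invariant q D" and "Ob \<in> OmegaAG q e"
  shows "multO D (uminus ` Ob) = multO D Ob"
proof -
  obtain x where "x \<in> ktri" "Ob = orbAG q e x"
    using assms(4) unfolding OmegaAG_def by blast
  moreover from this have "x \<noteq> 0"
    by (simp add: ktri_def)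
  ultimately show ?thesis
    using assms(3) odd_q
    by (simp add: image_uminus_orbAG multO_orbAG[OF assms(1-3)] ktri_uminus mult_invariant_def)
qed

lemma finite_jinv_support:
  fixes D :: "'k::field poly"
  assumes odd_q: "odd q" and periodic: "\<forall>x::'k. \<exists>N>0. x ^ (q ^ N) = x"
    and "mult_invariant q D" and "D \<noteq> 0"
  shows "finite {Ob \<in> OmegaAG' q e. multO D Ob \<noteq> 0}"
proof (rule finite_subset)
  show "finite (orbAG q e ` {x. poly D x = 0})"
    using assms(4) by (simp add: poly_roots_finite)
  show "{Ob \<in> OmegaAG' q e. multO D Ob \<noteq> 0} \<subseteq> orbAG q e ` {x. poly D x = 0}"
  proof
    fix Ob assume Ob: "Ob \<in> {Ob \<in> OmegaAG' q e. multO D Ob \<noteq> 0}"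
    then obtain x where "x \<in> ktri" and Ob_AG: "Ob = orbAG q e x"
      unfolding OmegaAG'_def OmegaAG_def by blast
    then have "poly D x = 0"
      using Ob by (simp add: multO_orbAG[OF assms(1-3)] mult_def order_root)
    with Ob_AG show "Ob \<in> orbAG q e ` {x. poly D x = 0}"
      by (intro image_eqI[of _ _ x]) simp_all
  qed
qed

lemma even_sum_multO_off_sqrt_minus_one:
  fixes D :: "'k::field poly" and i :: 'k
  assumes odd_q: "odd q" and periodic: "\<forall>x::'k. \<exists>N>0. x ^ (q ^ N) = x"
    and "mult_invariant q D" and "D \<noteq> 0"
    and "(2::'k) \<noteq> 0" and "i * i = -1"
  shows "even (\<Sum>Ob \<in> {Ob \<in> OmegaAG' q e. multO D Ob \<noteq> 0} - {{i, -i}}. multO D Ob)"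
proof -
  define S where "S = {Ob \<in> OmegaAG' q e. multO D Ob \<noteq> 0} - {{i, -i}}"
  define orb where "orb Ob = {Ob, uminus ` Ob}" for Ob :: "'k set"
  have mult_orb: "multO D (uminus ` Ob) = multO D Ob" if "Ob \<in> S" for Ob
  proof -
    have "Ob \<in> OmegaAG q e"
      using that by (simp add: S_def OmegaAG'_def)
    then show ?thesis
      by (rule multO_image_uminus[OF assms(1-3)])
  qed
  have "of_nat 2 dvd sum (multO D) S"
  proof (rule dvd_sum_if_orbits[where orb = orb])
    show "finite S"
      using finite_jinv_support[OF assms(1-4)] by (simp add: S_def)
    fix Ob assume "Ob \<in> S"
    then have Ob: "Ob \<in> OmegaAG' q e" "multO D Ob \<noteq> 0" "Ob \<noteq> {i, -i}"
      by (auto simp: S_def)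
    have "uminus ` uminus ` Ob = Ob"
      by (simp add: image_image)
    moreover have "uminus ` {i, -i} = {i, -i}"
      by auto
    ultimately have "uminus ` Ob \<noteq> {i, -i}"
      using Ob(3) by metis
    then have "uminus ` Ob \<in> S"
      using Ob image_uminus_OmegaAG'[OF odd_q] mult_orb[OF \<open>Ob \<in> S\<close>] by (simp add: S_def)
    moreover have "uminus ` Ob \<noteq> Ob"
      using OmegaAG'_uminus_invariant_eq[OF odd_q periodic assms(5,6) Ob(1)] Ob(3) by blast
    ultimately show "Ob \<in> orb Ob \<and> orb Ob \<subseteq> S \<and> card (orb Ob) = 2"
      using \<open>Ob \<in> S\<close> by (simp add: orb_def)
    fix Ob' assume "Ob' \<in> orb Ob"
    then show "orb Ob' = orb Ob \<and> multO D Ob' = multO D Ob"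
      using mult_orb[OF \<open>Ob \<in> S\<close>] by (auto simp: orb_def image_image)
  qed
  then show ?thesis
    by (simp add: S_def)
qed

lemma jinv_mod_2:
  fixes D :: "'k::field poly" and i :: 'k
  assumes odd_q: "odd q" and periodic: "\<forall>x::'k. \<exists>N>0. x ^ (q ^ N) = x"
    and "mult_invariant q D" and "D \<noteq> 0"
    and "(2::'k) \<noteq> 0" and "i * i = -1"
  shows "jinv q e D mod 2 = int (if gam q e i = - i then mult D i else 0) mod 2"
proof -
  define S where "S = {Ob \<in> OmegaAG' q e. multO D Ob \<noteq> 0}"
  have "multO D {i, -i} = mult D i"
    using multO_orbAG[OF assms(1-3) sqrt_minus_one_in_ktri[OF assms(5,6)]]
      orbAG_sqrt_minus_one[OF odd_q periodic assms(5,6)]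
    by simp
  then have "{i, -i} \<in> S \<longleftrightarrow> gam q e i = - i \<and> mult D i \<noteq> 0"
    using sqrt_minus_one_orbit_in_OmegaAG'_iff[OF odd_q periodic assms(5,6)] by (simp add: S_def)
  moreover have "even (sum (multO D) (S - {{i, -i}}))"
    using even_sum_multO_off_sqrt_minus_one[OF assms] by (simp add: S_def)
  moreover have "finite S"
    using finite_jinv_support[OF assms(1-4)] by (simp add: S_def)
  ultimately obtain b where "sum (multO D) S = (if gam q e i = - i then mult D i else 0) + 2 * b"
    using \<open>multO D {i, -i} = mult D i\<close>
    by (cases "{i, -i} \<in> S") (auto simp: sum.remove elim!: evenE)
  then have "jinv q e D = int (if gam q e i = - i then mult D i else 0) + 2 * int b"
    unfolding jinv_def S_def[symmetric] by (simp flip: of_nat_sum)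
  then show ?thesis
    by simp
qed

lemma quarter_product_mod_2:
  fixes m K r e n q :: nat
  assumes "e < 2" and "q = 2 * r + 1" and "n = 2 * m + 4 * K"
  shows "(int n * (int q - (-1) ^ e) div 4) mod 2 = int (if odd (e + r) then m else 0) mod 2"
proof -
  have "int n * (int q - (-1) ^ e) = 4 * ((int m + 2 * int K) * (int r + int e))"
    using assms by (cases e) (auto simp: algebra_simps)
  then have "int n * (int q - (-1) ^ e) div 4 = (int m + 2 * int K) * (int r + int e)"
    by simp
  then show ?thesis
    by (auto simp: mod2_eq_if)
qed

theorem mainTheorem7:
  fixes D :: "'k::field poly" and p m q e n :: nat
  assumes "prime p" and "odd p" and "of_nat p = (0::'k)"
    and "m > 0" and "q = p ^ m"
    and "\<forall>P::'k poly. degree P > 0 \<longrightarrow> (\<exists>x. poly P x = 0)"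
    and "\<forall>x::'k. \<exists>N>0. x ^ (q ^ N) = x"
    and "e < 2" and "even n"
    and "D \<in> frakA n"
    and "\<forall>x::'k. x \<noteq> 0 \<longrightarrow> mult D (- x) = mult D x"
    and "\<forall>x::'k. x \<noteq> 0 \<longrightarrow> mult D (x ^ q) = mult D x"
  shows "jinv q e D mod 2 = (int n * (int q - (-1) ^ e) div 4) mod 2"
proof -
  have closed: "\<And>P::'k poly. degree P > 0 \<Longrightarrow> \<exists>x. poly P x = 0"
    using assms(6) by blast
  obtain i :: 'k where i: "i * i = -1"
    using sqrt_minus_one_exists[OF closed] by blast
  have two: "(2::'k) \<noteq> 0"
    using two_neq_zero_if_odd_char[OF assms(2,3)] .
  have "odd q"
    using assms(2,5) by simp
  then obtain r where r: "q = 2 * r + 1"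
    by (elim oddE)
  have D: "D \<noteq> 0" "poly D 0 \<noteq> 0" "degree D = n"
    "\<forall>x. x \<noteq> 0 \<longrightarrow> mult D (inverse x) = mult D x" "even (mult D 1)"
    using assms(10) by (auto simp: frakA_def)
  have "mult_invariant q D"
    using D(4) assms(11,12) by (simp add: mult_invariant_def)
  have "jinv q e D mod 2 = int (if odd (e + r) then mult D i else 0) mod 2"
    using jinv_mod_2[OF \<open>odd q\<close> assms(7) \<open>mult_invariant q D\<close> D(1) two i]
      gam_sqrt_minus_one_eq_iff[OF two i r] by simp
  moreover obtain K where "n = 2 * mult D i + 4 * K"
    using degree_eq_twice_mult_sqrt_minus_one_mod_4[OF D(1,2) closed two i D(4) assms(11) D(5)] D(3)
    by blast
  ultimately show ?thesis
    using quarter_product_mod_2[OF assms(8) r] by simp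
qed

end
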